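(* Let $u(x)$ be a real-analytic function near $0$ in $\mathbb{R}^n$ such that its Hessian $Hu=(u_{ij})$ has rank one at every point near $0$ and $u_{11}(0)\neq0$. Then, for all $x$ near $0$ and every multi-index $I\in\mathbb{Z}_+^n$, the vector $u_{xx^I}(x)$ belongs to the span of the vectors $u_{x(x^1)^m}(x)$, $0\le m\le|I|$.
   Context: For $I=(I_1,\dots,I_n)\in\mathbb{Z}_+^n$ (nonnegative integers), $|I|=I_1+\dots+I_n$, and $u_{xx^I}$ denotes the vector $\partial^I\nabla u=\big(\partial_{x^1}^{I_1}\cdots\partial_{x^n}^{I_n}\partial_{x^j}u\big)_{j=1,\dots,n}\in\mathbb{R}^n$; $u_{x(x^1)^m}=\partial_{x^1}^m\nabla u$. *)

theory Defs
  imports "HOL-Analysis.Analysis"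
begin

definition monomial_at :: "real^'n \<Rightarrow> ('n \<Rightarrow> nat) \<Rightarrow> real^'n \<Rightarrow> real" where
  "monomial_at a I x = (\<Prod>i\<in>UNIV. (x $ i - a $ i) ^ I i)"

text \<open>Real analyticity at a point: near a, u is the sum of an (unconditionally,
  i.e. absolutely) convergent power series in x - a.\<close>
definition real_analytic_at :: "(real^'n \<Rightarrow> real) \<Rightarrow> real^'n \<Rightarrow> bool" where
  "real_analytic_at u a \<longleftrightarrow>
     (\<exists>r>0. \<exists>c :: ('n \<Rightarrow> nat) \<Rightarrow> real.
        \<forall>x\<in>ball a r. ((\<lambda>I. c I * monomial_at a I x) has_sum u x) UNIV)"

definition real_analytic_near :: "(real^'n \<Rightarrow> real) \<Rightarrow> real^'n \<Rightarrow> bool" where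
  "real_analytic_near u a \<longleftrightarrow> (\<exists>U. open U \<and> a \<in> U \<and> (\<forall>y\<in>U. real_analytic_at u y))"

definition pd :: "'n \<Rightarrow> (real^'n \<Rightarrow> real) \<Rightarrow> real^'n \<Rightarrow> real" where
  "pd i f x = deriv (\<lambda>t. f (x + t *\<^sub>R axis i 1)) 0"

fun pdl :: "'n list \<Rightarrow> (real^'n \<Rightarrow> real) \<Rightarrow> real^'n \<Rightarrow> real" where
  "pdl [] f = f"
| "pdl (i # is) f = pd i (pdl is f)"

text \<open>The partial derivative operator of a multi-index I: differentiate I i times in
  coordinate i (in some fixed order; for analytic functions the order is irrelevant).\<close>
definition pdI :: "('n::finite \<Rightarrow> nat) \<Rightarrow> (real^'n \<Rightarrow> real) \<Rightarrow> real^'n \<Rightarrow> real" where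
  "pdI I f = pdl (SOME xs. \<forall>i. count_list xs i = I i) f"

definition mi_abs :: "('n::finite \<Rightarrow> nat) \<Rightarrow> nat" where
  "mi_abs I = (\<Sum>i\<in>UNIV. I i)"

text \<open>Gradient-valued derivatives: u_{xx^I}(x) = (\<partial>^I \<partial>_j u (x))_j.\<close>
definition grad_pdI :: "('n::finite \<Rightarrow> nat) \<Rightarrow> (real^'n \<Rightarrow> real) \<Rightarrow> real^'n \<Rightarrow> real^'n" where
  "grad_pdI I u x = (\<chi> j. pdI I (pd j u) x)"

definition hessian :: "(real^'n \<Rightarrow> real) \<Rightarrow> real^'n \<Rightarrow> real^'n^'n" where
  "hessian u x = (\<chi> i j. pd i (pd j u) x)"

end

theory Submission
  imports Defs
begin

text \<open>Where u_kk does not vanish, rank one of the Hessian makes its rows proportional: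
  u_kk u_ij = u_ik u_kj. Applying a derivative \<partial>^J to this identity and expanding both products
  by the Leibniz rule gives u_kk \<partial>^J \<partial>_i \<nabla>u = u_ik \<partial>^J \<partial>_k \<nabla>u modulo derivatives of \<nabla>u of
  order at most |J|. Dividing by u_kk, a derivative in a direction i \<noteq> k is traded for one in
  direction k at the cost of lower order terms; induction on the order, and for fixed order on
  the number of derivatives in directions other than k, gives the claim. Analyticity is used
  through the power series of u at 0: it makes all partial derivatives exist and commute, and
  makes u_kk continuous.\<close>

lemma power_derivative_factors_le_geometric:
  fixes K \<sigma> :: real
  assumes K: "0 < K" "K < \<sigma>"
  obtains C where "\<And>p. real p * K ^ (p - 1) \<le> C * \<sigma> ^ p"
    and "\<And>p. real p * real (p - 1) * K ^ (p - 2) \<le> C * \<sigma> ^ p"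
proof -
  define q where "q = sqrt (K / \<sigma>)"
  have "0 \<le> q" "q < 1" using K by (auto simp: q_def)
  then have "(\<lambda>p. of_nat p * q ^ p) \<longlonglongrightarrow> (0::real)"
    by (intro powser_times_n_limit_0) simp
  then have "Bseq (\<lambda>p. of_nat p * q ^ p)" by (rule convergent_imp_Bseq[OF convergentI])
  then obtain B where B: "\<And>p. \<bar>real p * q ^ p\<bar> \<le> B" by (auto simp: Bseq_def)
  have quadratic: "real p * real p * K ^ p \<le> B\<^sup>2 * \<sigma> ^ p" for p
  proof -
    have "K ^ p = (q\<^sup>2) ^ p * \<sigma> ^ p" using K by (simp add: q_def power_divide)
    then have "real p * real p * K ^ p = (real p * q ^ p)\<^sup>2 * \<sigma> ^ p"
      by (simp add: power_mult_distrib power_mult[symmetric] mult.commute power2_eq_square)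
    also have "\<dots> \<le> B\<^sup>2 * \<sigma> ^ p"
    proof (rule mult_right_mono)
      show "(real p * q ^ p)\<^sup>2 \<le> B\<^sup>2"
        by (metis B abs_ge_zero power2_abs power_mono)
    qed (use K in simp)
    finally show ?thesis .
  qed
  show ?thesis
  proof
    fix p
    have "real p * K ^ (p - 1) * K = real p * K ^ p"
      by (cases p) simp_all
    also have "\<dots> \<le> real p * real p * K ^ p"
      using K by (cases p) simp_all
    finally have "real p * K ^ (p - 1) \<le> B\<^sup>2 / K * \<sigma> ^ p"
      using quadratic[of p] K by (simp add: field_simps)
    moreover have "0 \<le> B\<^sup>2 / K\<^sup>2 * \<sigma> ^ p" using K by simp
    ultimately show "real p * K ^ (p - 1) \<le> (B\<^sup>2 / K + B\<^sup>2 / K\<^sup>2) * \<sigma> ^ p"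
      by (simp add: distrib_right)
    have "real p * real (p - 1) * K ^ (p - 2) * K\<^sup>2 = real p * real (p - 1) * K ^ p"
    proof (cases "p < 2")
      case False
      then obtain n where "p = n + 2" by (metis add.commute le_Suc_ex not_less)
      then show ?thesis by (simp add: power_add power2_eq_square)
    qed (auto simp: less_2_cases_iff)
    also have "\<dots> \<le> real p * real p * K ^ p"
      using K by (intro mult_right_mono mult_left_mono) auto
    finally have "real p * real (p - 1) * K ^ (p - 2) \<le> B\<^sup>2 / K\<^sup>2 * \<sigma> ^ p"
      using quadratic[of p] K by (simp add: field_simps)
    moreover have "0 \<le> B\<^sup>2 / K * \<sigma> ^ p" using K by simp
    ultimately show "real p * real (p - 1) * K ^ (p - 2) \<le> (B\<^sup>2 / K + B\<^sup>2 / K\<^sup>2) * \<sigma> ^ p"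
      by (simp add: distrib_right)
  qed
qed

lemma power_remainder_le_geometric:
  fixes K \<sigma> :: real
  assumes "0 < K" "K < \<sigma>"
  obtains C where "\<And>p a. \<bar>a\<bar> \<le> K \<Longrightarrow> real p * \<bar>a\<bar> ^ (p - 1) \<le> C * \<sigma> ^ p"
    and "\<And>p a t. \<bar>a\<bar> \<le> K \<Longrightarrow> \<bar>a + t\<bar> \<le> K \<Longrightarrow>
      \<bar>(a + t) ^ p - a ^ p - t * (real p * a ^ (p - 1))\<bar> \<le> C * \<sigma> ^ p * t\<^sup>2"
proof -
  obtain C where C1: "\<And>p. real p * K ^ (p - 1) \<le> C * \<sigma> ^ p"
    and C2: "\<And>p. real p * real (p - 1) * K ^ (p - 2) \<le> C * \<sigma> ^ p"
    using power_derivative_factors_le_geometric[OF assms] by blast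
  show ?thesis
  proof
    fix p and a :: real assume "\<bar>a\<bar> \<le> K"
    then show "real p * \<bar>a\<bar> ^ (p - 1) \<le> C * \<sigma> ^ p"
      by (intro order.trans[OF _ C1] mult_left_mono power_mono) auto
  next
    fix p and a t :: real assume a: "\<bar>a\<bar> \<le> K" and a_t: "\<bar>a + t\<bar> \<le> K"
    show "\<bar>(a + t) ^ p - a ^ p - t * (real p * a ^ (p - 1))\<bar> \<le> C * \<sigma> ^ p * t\<^sup>2"
    proof (cases "t = 0")
      case False
      have "(a + t) ^ p - a ^ p - t * (real p * a ^ (p - 1))
          = (((a + t) ^ p - a ^ p) / t - real p * a ^ (p - 1)) * t"
        using False by (simp add: field_simps)
      then have "\<bar>(a + t) ^ p - a ^ p - t * (real p * a ^ (p - 1))\<bar>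
          = \<bar>((a + t) ^ p - a ^ p) / t - real p * a ^ (p - 1)\<bar> * \<bar>t\<bar>"
        by (simp add: abs_mult)
      also have "\<dots> \<le> real p * real (p - 1) * K ^ (p - 2) * \<bar>t\<bar> * \<bar>t\<bar>"
        using lemma_termdiff3[OF False, of a K p] a a_t by (intro mult_right_mono) simp_all
      also have "\<dots> = real p * real (p - 1) * K ^ (p - 2) * t\<^sup>2"
        by (simp add: power2_eq_square mult.assoc)
      also have "\<dots> \<le> C * \<sigma> ^ p * t\<^sup>2"
        by (rule mult_right_mono[OF C2]) simp
      finally show ?thesis .
    qed simp
  qed
qed

lemma has_real_derivative_at_0_quadratic_remainder:
  fixes F :: "real \<Rightarrow> real"
  assumes "0 < \<delta>" "\<And>t. \<bar>t\<bar> < \<delta> \<Longrightarrow> \<bar>F t - F 0 - t * D\<bar> \<le> M * t\<^sup>2"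
  shows "(F has_real_derivative D) (at 0)"
proof -
  have "norm ((F t - F 0) / (t - 0) - D) \<le> M * \<bar>t\<bar>" if "t \<noteq> 0" "\<bar>t\<bar> < \<delta>" for t
  proof -
    have "(F t - F 0) / (t - 0) - D = (F t - F 0 - t * D) / t"
      using that(1) by (simp add: field_simps)
    then have "norm ((F t - F 0) / (t - 0) - D) = \<bar>F t - F 0 - t * D\<bar> / \<bar>t\<bar>"
      by simp
    also have "\<dots> \<le> M * t\<^sup>2 / \<bar>t\<bar>"
      by (rule divide_right_mono[OF assms(2)[OF that(2)]]) simp
    also have "M * t\<^sup>2 / \<bar>t\<bar> = M * \<bar>t\<bar>"
      using that(1) by (simp add: field_simps power2_eq_square)
    finally show ?thesis .
  qed
  then have "\<forall>\<^sub>F t in at 0. norm ((F t - F 0) / (t - 0) - D) \<le> M * \<bar>t\<bar>"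
    unfolding eventually_at using assms(1) by (intro exI[of _ \<delta>]) (simp add: dist_real_def)
  moreover have "((\<lambda>t. M * \<bar>t\<bar>) \<longlongrightarrow> 0) (at 0)"
    by (intro tendsto_mult_right_zero tendsto_rabs_zero tendsto_ident_at)
  ultimately have "((\<lambda>t. (F t - F 0) / (t - 0) - D) \<longlongrightarrow> 0) (at 0)"
    by (rule Lim_null_comparison)
  then show ?thesis unfolding has_field_derivative_iff by (simp add: Lim_null[symmetric])
qed
lemma has_sum_powers_has_real_derivative:
  fixes b :: "'a \<Rightarrow> real" and e :: "'a \<Rightarrow> nat"
  assumes dominated: "(\<lambda>I. \<bar>b I\<bar> * \<sigma> ^ e I) summable_on UNIV"
    and a: "\<bar>a\<bar> < \<sigma>"
    and F: "\<And>t. \<bar>t\<bar> < \<sigma> - \<bar>a\<bar> \<Longrightarrow> ((\<lambda>I. b I * (a + t) ^ e I) has_sum F t) UNIV"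
  obtains D where "((\<lambda>I. b I * (real (e I) * a ^ (e I - 1))) has_sum D) UNIV"
    and "(F has_real_derivative D) (at 0)"
proof -
  define K where "K = (\<bar>a\<bar> + \<sigma>) / 2"
  have K: "0 < K" "K < \<sigma>" "\<bar>a\<bar> < K" using a by (auto simp: K_def)
  obtain C where C1: "\<And>p a. \<bar>a\<bar> \<le> K \<Longrightarrow> real p * \<bar>a\<bar> ^ (p - 1) \<le> C * \<sigma> ^ p"
    and C2: "\<And>p a t. \<bar>a\<bar> \<le> K \<Longrightarrow> \<bar>a + t\<bar> \<le> K \<Longrightarrow>
      \<bar>(a + t) ^ p - a ^ p - t * (real p * a ^ (p - 1))\<bar> \<le> C * \<sigma> ^ p * t\<^sup>2"
    using power_remainder_le_geometric[OF K(1,2)] by blast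
  have "0 \<le> C" using C1[of 0 0] K by simp
  define G where "G I = \<bar>b I\<bar> * \<sigma> ^ e I" for I
  obtain SG where SG: "(G has_sum SG) UNIV"
    using dominated unfolding G_def summable_on_def by blast
  define d where "d I = b I * (real (e I) * a ^ (e I - 1))" for I
  have d_le: "\<bar>d I\<bar> \<le> \<bar>C * G I\<bar>" for I
  proof -
    have "\<bar>d I\<bar> = \<bar>b I\<bar> * (real (e I) * \<bar>a\<bar> ^ (e I - 1))"
      by (simp add: d_def abs_mult power_abs)
    also have "\<dots> \<le> \<bar>b I\<bar> * (C * \<sigma> ^ e I)"
      using C1[of a "e I"] K by (intro mult_left_mono) simp_all
    also have "\<dots> = \<bar>C * G I\<bar>"
      using \<open>0 \<le> C\<close> K by (simp add: G_def abs_mult mult.left_commute)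
    finally show ?thesis .
  qed
  have "(\<lambda>I. norm (C * G I)) summable_on UNIV"
    using summable_on_cmult_right[OF has_sum_imp_summable[OF SG]]
    by (rule summable_on_iff_abs_summable_on_real[THEN iffD1])
  then have "(\<lambda>I. norm (d I)) summable_on UNIV"
    by (rule Infinite_Sum.abs_summable_on_comparison_test) (simp add: d_le)
  then have "d summable_on UNIV" by (rule summable_on_iff_abs_summable_on_real[THEN iffD2])
  then obtain D where D: "(d has_sum D) UNIV" by (auto simp: summable_on_def)
  have "\<bar>F t - F 0 - t * D\<bar> \<le> C * SG * t\<^sup>2" if t: "\<bar>t\<bar> < K - \<bar>a\<bar>" for t
  proof -
    have "((\<lambda>I. b I * (a + t) ^ e I + - (b I * a ^ e I) + - (t * d I))
        has_sum (F t + - F 0 + - (t * D))) UNIV"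
      using has_sum_add[OF has_sum_add[OF F has_sum_uminusI[OF F[of 0]]]
          has_sum_uminusI[OF has_sum_cmult_right[OF D, of t]]] t K by simp
    then have remainder: "((\<lambda>I. b I * ((a + t) ^ e I - a ^ e I - t * (real (e I) * a ^ (e I - 1))))
        has_sum (F t - F 0 - t * D)) UNIV"
      by (simp add: d_def algebra_simps)
    have "\<bar>a + t\<bar> \<le> K" using t abs_triangle_ineq[of a t] by simp
    then have "norm (b I * ((a + t) ^ e I - a ^ e I - t * (real (e I) * a ^ (e I - 1))))
        \<le> C * t\<^sup>2 * G I" for I
      using mult_left_mono[OF C2[of a t "e I"], of "\<bar>b I\<bar>"] K
      by (simp add: G_def abs_mult mult_ac)
    from norm_infsum_le[OF remainder has_sum_cmult_right[OF SG] this] show ?thesis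
      by (simp add: mult_ac)
  qed
  with K have "(F has_real_derivative D) (at 0)"
    by (intro has_real_derivative_at_0_quadratic_remainder[of "K - \<bar>a\<bar>"]) auto
  with D show ?thesis unfolding d_def by (rule that)
qed

definition power_series_on ::
    "real \<Rightarrow> (('n::finite \<Rightarrow> nat) \<Rightarrow> real) \<Rightarrow> (real^'n \<Rightarrow> real) \<Rightarrow> bool" where
  "power_series_on r c f \<longleftrightarrow> (\<forall>y\<in>ball 0 r. ((\<lambda>I. c I * monomial_at 0 I y) has_sum f y) UNIV)"

lemma power_series_onD:
  "power_series_on r c f \<Longrightarrow> y \<in> ball 0 r \<Longrightarrow> ((\<lambda>I. c I * monomial_at 0 I y) has_sum f y) UNIV"
  unfolding power_series_on_def by blast

lemma power_series_on_abs_summable: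
  assumes "power_series_on r c f" "w \<in> ball 0 r"
  shows "(\<lambda>I. \<bar>c I * monomial_at 0 I w\<bar>) summable_on UNIV"
proof -
  have "(\<lambda>I. c I * monomial_at 0 I w) summable_on UNIV"
    using power_series_onD[OF assms] by (auto simp: summable_on_def)
  then show ?thesis
    by (subst (asm) summable_on_iff_abs_summable_on_real) simp
qed

lemma monomial_at_0_split:
  fixes y :: "real^'n::finite"
  shows "monomial_at 0 I y = (y $ i) ^ I i * (\<Prod>l\<in>UNIV - {i}. (y $ l) ^ I l)"
  unfolding monomial_at_def by (simp add: prod.remove)

lemma monomial_at_0_shift:
  fixes y :: "real^'n::finite"
  shows "monomial_at 0 I (y + t *\<^sub>R axis i 1) = (y $ i + t) ^ I i * (\<Prod>l\<in>UNIV - {i}. (y $ l) ^ I l)"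
  unfolding monomial_at_0_split[of _ _ i] by (auto simp: axis_def intro!: prod.cong)

lemma power_series_on_line_derivative:
  fixes f :: "real^'n::finite \<Rightarrow> real" and i :: 'n
  assumes f: "power_series_on r c f" and y: "y \<in> ball 0 r"
  defines "m I \<equiv> \<Prod>l\<in>UNIV - {i}. (y $ l) ^ I l"
  obtains D where "((\<lambda>I. c I * m I * (real (I i) * (y $ i) ^ (I i - 1))) has_sum D) UNIV"
    and "((\<lambda>t. f (y + t *\<^sub>R axis i 1)) has_real_derivative D) (at 0)"
proof -
  define \<epsilon> where "\<epsilon> = (r - norm y) / 2"
  have \<epsilon>: "0 < \<epsilon>" "norm y + 2 * \<epsilon> = r" using y by (auto simp: \<epsilon>_def field_simps)
  define w where "w = (\<chi> l. \<bar>y $ l\<bar>) + \<epsilon> *\<^sub>R axis i 1"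
  have "norm w \<le> norm (\<chi> l. \<bar>y $ l\<bar>) + \<epsilon>"
    using norm_triangle_ineq[of "\<chi> l. \<bar>y $ l\<bar>" "\<epsilon> *\<^sub>R axis i 1"] \<epsilon> by (simp add: w_def)
  also have "norm (\<chi> l. \<bar>y $ l\<bar>) = norm y" by (simp add: norm_vec_def)
  finally have w: "w \<in> ball 0 r" using \<epsilon> by simp
  have abs_term: "\<bar>c I * monomial_at 0 I w\<bar> = \<bar>c I * m I\<bar> * (\<bar>y $ i\<bar> + \<epsilon>) ^ I i" for I
  proof -
    have "monomial_at 0 I w = (\<bar>y $ i\<bar> + \<epsilon>) ^ I i * \<bar>m I\<bar>"
      unfolding monomial_at_0_split[of _ _ i] m_def abs_prod
      by (intro arg_cong2[where f = "(*)"] prod.cong) (auto simp: w_def axis_def power_abs)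
    then show ?thesis using \<epsilon> by (simp add: abs_mult)
  qed
  have dominated: "(\<lambda>I. \<bar>c I * m I\<bar> * (\<bar>y $ i\<bar> + \<epsilon>) ^ I i) summable_on UNIV"
    using power_series_on_abs_summable[OF f w] by (simp only: abs_term)
  have line: "((\<lambda>I. c I * m I * (y $ i + t) ^ I i) has_sum f (y + t *\<^sub>R axis i 1)) UNIV"
    if "\<bar>t\<bar> < \<bar>y $ i\<bar> + \<epsilon> - \<bar>y $ i\<bar>" for t
  proof -
    have "norm (y + t *\<^sub>R axis i 1) < r"
      using that norm_triangle_ineq[of y "t *\<^sub>R axis i 1"] \<epsilon> by simp
    then show ?thesis
      using power_series_onD[OF f, of "y + t *\<^sub>R axis i 1"]
      by (simp add: monomial_at_0_shift m_def mult_ac)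
  qed
  show ?thesis
    by (rule has_sum_powers_has_real_derivative[OF dominated _ line]) (use \<epsilon> that in auto)
qed

lemma has_sum_reindex_Suc_at:
  fixes g :: "('a \<Rightarrow> nat) \<Rightarrow> 'b::{comm_monoid_add, topological_space}"
  assumes g: "(g has_sum s) UNIV" and vanish: "\<And>I. I i = 0 \<Longrightarrow> g I = 0"
  shows "((\<lambda>J. g (J(i := Suc (J i)))) has_sum s) UNIV"
proof -
  define h where "h J = J(i := Suc (J i))" for J :: "'a \<Rightarrow> nat"
  have "inj h"
  proof (rule injI)
    fix J J' assume "h J = h J'"
    then have "J l = J' l" for l by (cases "l = i") (auto simp: h_def fun_eq_iff dest: spec[of _ l])
    then show "J = J'" by blast
  qed
  have "I \<in> range h" if "I i \<noteq> 0" for I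
    using that by (intro range_eqI[of _ _ "I(i := I i - 1)"]) (auto simp: h_def fun_eq_iff)
  then have "(g has_sum s) (range h)"
    using g vanish by (subst has_sum_cong_neutral[where T = UNIV and g = g]) auto
  then show ?thesis
    using has_sum_reindex[OF \<open>inj h\<close>, of g s] by (simp add: h_def comp_def)
qed

definition coeff_pd :: "'n \<Rightarrow> (('n \<Rightarrow> nat) \<Rightarrow> real) \<Rightarrow> ('n \<Rightarrow> nat) \<Rightarrow> real" where
  "coeff_pd i c J = real (Suc (J i)) * c (J(i := Suc (J i)))"

lemma
  fixes f :: "real^'n::finite \<Rightarrow> real"
  assumes f: "power_series_on r c f" and y: "y \<in> ball 0 r"
  shows has_real_derivative_pd: "((\<lambda>t. f (y + t *\<^sub>R axis i 1)) has_real_derivative pd i f y) (at 0)"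
    and has_sum_coeff_pd: "((\<lambda>J. coeff_pd i c J * monomial_at 0 J y) has_sum pd i f y) UNIV"
proof -
  define m where "m I = (\<Prod>l\<in>UNIV - {i}. (y $ l) ^ I l)" for I
  obtain D where D: "((\<lambda>I. c I * m I * (real (I i) * (y $ i) ^ (I i - 1))) has_sum D) UNIV"
    and deriv: "((\<lambda>t. f (y + t *\<^sub>R axis i 1)) has_real_derivative D) (at 0)"
    using power_series_on_line_derivative[OF f y, of i] unfolding m_def by blast
  have "pd i f y = D" unfolding pd_def using deriv by (rule DERIV_imp_deriv)
  with deriv show "((\<lambda>t. f (y + t *\<^sub>R axis i 1)) has_real_derivative pd i f y) (at 0)" by simp
  have "m (J(i := Suc (J i))) = m J" for J unfolding m_def by (intro prod.cong) auto
  then have "c (J(i := Suc (J i))) * m (J(i := Suc (J i))) * (real (Suc (J i)) * (y $ i) ^ J i)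
      = coeff_pd i c J * monomial_at 0 J y" for J
    by (simp add: coeff_pd_def monomial_at_0_split[of J y i] m_def)
  with has_sum_reindex_Suc_at[OF D, of i] \<open>pd i f y = D\<close>
  show "((\<lambda>J. coeff_pd i c J * monomial_at 0 J y) has_sum pd i f y) UNIV"
    by simp
qed

lemma power_series_on_pd:
  "power_series_on r c f \<Longrightarrow> power_series_on r (coeff_pd i c) (pd i f)"
  by (simp add: power_series_on_def[of _ "coeff_pd i c"] has_sum_coeff_pd)

lemma power_series_on_pdl:
  "power_series_on r c f \<Longrightarrow> power_series_on r (foldr coeff_pd xs c) (pdl xs f)"
  by (induction xs) (simp_all add: power_series_on_pd)

lemma coeff_pd_commute: "coeff_pd i (coeff_pd j c) = coeff_pd j (coeff_pd i c)"
proof (cases "i = j")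
  case False
  then show ?thesis
    by (simp add: fun_eq_iff coeff_pd_def fun_upd_twist[OF False] mult.left_commute)
qed simp

lemma foldr_coeff_pd_mset_eq:
  assumes "mset xs = mset ys"
  shows "foldr coeff_pd xs = foldr coeff_pd ys"
proof -
  have comm: "coeff_pd i \<circ> coeff_pd j = coeff_pd j \<circ> coeff_pd i" for i j
    by (simp add: fun_eq_iff coeff_pd_commute)
  have "fold coeff_pd xs = fold coeff_pd ys"
    by (rule fold_multiset_equiv) (use comm assms in auto)
  then show ?thesis
    by (simp add: foldr_fold[of xs coeff_pd] foldr_fold[of ys coeff_pd] comm)
qed

lemma pdl_mset_eq:
  assumes f: "power_series_on r c f" and y: "y \<in> ball 0 r" and "mset xs = mset ys"
  shows "pdl xs f y = pdl ys f y"
proof (rule has_sum_unique)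
  show "((\<lambda>I. foldr coeff_pd xs c I * monomial_at 0 I y) has_sum pdl xs f y) UNIV"
    by (rule power_series_onD[OF power_series_on_pdl[OF f] y])
  show "((\<lambda>I. foldr coeff_pd xs c I * monomial_at 0 I y) has_sum pdl ys f y) UNIV"
    using power_series_onD[OF power_series_on_pdl[OF f] y, of ys]
    by (simp add: foldr_coeff_pd_mset_eq[OF \<open>mset xs = mset ys\<close>])
qed

lemma ex_count_list_eq:
  fixes I :: "'n::finite \<Rightarrow> nat"
  shows "\<exists>xs. \<forall>l. count_list xs l = I l"
proof -
  obtain xs where xs: "mset xs = (\<Sum>l\<in>UNIV. replicate_mset (I l) l)" using ex_mset by blast
  have "count_list xs l = I l" for l
    unfolding count_mset[symmetric] xs count_sum by (simp add: sum.delta)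
  then show ?thesis by blast
qed

lemma pdI_eq_pdl:
  assumes "power_series_on r c f" "y \<in> ball 0 r" "\<And>l. count_list xs l = I l"
  shows "pdI I f y = pdl xs f y"
proof -
  have "\<forall>l. count_list (SOME ys. \<forall>l. count_list ys l = I l) l = I l"
    by (rule someI_ex) (rule ex_count_list_eq)
  then show ?thesis
    unfolding pdI_def using assms(3)
    by (intro pdl_mset_eq[OF assms(1,2)] multiset_eqI) (simp add: count_mset)
qed

definition has_pd :: "'n \<Rightarrow> (real^'n \<Rightarrow> real) \<Rightarrow> real \<Rightarrow> real^'n \<Rightarrow> bool" where
  "has_pd i f D y \<longleftrightarrow> ((\<lambda>t. f (y + t *\<^sub>R axis i 1)) has_real_derivative D) (at 0)"

lemma has_pd_imp_pd: "has_pd i f D y \<Longrightarrow> pd i f y = D"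
  unfolding has_pd_def pd_def by (rule DERIV_imp_deriv)

lemma power_series_on_has_pd:
  "power_series_on r c f \<Longrightarrow> y \<in> ball 0 r \<Longrightarrow> has_pd i f (pd i f y) y"
  unfolding has_pd_def by (rule has_real_derivative_pd)

lemma has_pd_mult:
  "has_pd i f D y \<Longrightarrow> has_pd i g E y \<Longrightarrow> has_pd i (\<lambda>z. f z * g z) (D * g y + f y * E) y"
  unfolding has_pd_def by (drule (1) DERIV_mult) (simp add: mult.commute)

lemma has_pd_add:
  "has_pd i f D y \<Longrightarrow> has_pd i g E y \<Longrightarrow> has_pd i (\<lambda>z. f z + g z) (D + E) y"
  unfolding has_pd_def by (rule DERIV_add)

lemma has_pd_sum_list:
  "(\<And>p. p \<in> set W \<Longrightarrow> has_pd i (F p) (D p) y) \<Longrightarrow>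
    has_pd i (\<lambda>z. \<Sum>p\<leftarrow>W. F p z) (\<Sum>p\<leftarrow>W. D p) y"
proof (induction W)
  case (Cons w W)
  then show ?case using has_pd_add[of i "F w" "D w" y "\<lambda>z. \<Sum>p\<leftarrow>W. F p z"] by simp
qed (simp add: has_pd_def)

lemma pd_cong_open:
  assumes "open V" "y \<in> V" "\<And>z. z \<in> V \<Longrightarrow> f z = g z"
  shows "pd i f y = pd i g y"
  unfolding pd_def
proof (rule deriv_cong_ev)
  have "((\<lambda>t. y + t *\<^sub>R axis i 1) \<longlongrightarrow> y + 0 *\<^sub>R axis i (1::real)) (nhds 0)"
    by (intro tendsto_intros) (simp add: filterlim_ident)
  then have "((\<lambda>t. y + t *\<^sub>R axis i 1) \<longlongrightarrow> y) (nhds 0)" by simp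
  then have "\<forall>\<^sub>F t in nhds 0. y + t *\<^sub>R axis i 1 \<in> V"
    using assms(1,2) unfolding tendsto_def by blast
  then show "\<forall>\<^sub>F t in nhds 0. f (y + t *\<^sub>R axis i 1) = g (y + t *\<^sub>R axis i 1)"
    by eventually_elim (rule assms(3))
qed simp

lemma pdl_cong_open:
  assumes "open V" "y \<in> V" "\<And>z. z \<in> V \<Longrightarrow> f z = g z"
  shows "pdl xs f y = pdl xs g y"
  using assms(2)
proof (induction xs arbitrary: y)
  case (Cons i xs)
  then show ?case using pd_cong_open[OF assms(1) Cons(2), of "pdl xs f" "pdl xs g" i] by simp
qed (simp add: assms(3))

lemma pd_product_sum:
  assumes a: "power_series_on r ca a" and g: "power_series_on r cg g" and y: "y \<in> ball 0 r"
    and W: "\<And>p. p \<in> set W \<Longrightarrow> \<exists>cw. power_series_on r cw (snd p)"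
  shows "pd i (\<lambda>z. a z * pdl xs g z + (\<Sum>p\<leftarrow>W. snd p z * pdl (fst p) g z)) y
    = pd i a y * pdl xs g y + a y * pdl (i # xs) g y
      + (\<Sum>p\<leftarrow>W. pd i (snd p) y * pdl (fst p) g y + snd p y * pdl (i # fst p) g y)"
proof (rule has_pd_imp_pd, rule has_pd_add)
  have pdl_g: "has_pd i (pdl zs g) (pdl (i # zs) g y) y" for zs
    using power_series_on_has_pd[OF power_series_on_pdl[OF g] y] by simp
  show "has_pd i (\<lambda>z. a z * pdl xs g z) (pd i a y * pdl xs g y + a y * pdl (i # xs) g y) y"
    by (rule has_pd_mult[OF power_series_on_has_pd[OF a y] pdl_g])
  show "has_pd i (\<lambda>z. \<Sum>p\<leftarrow>W. snd p z * pdl (fst p) g z)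
      (\<Sum>p\<leftarrow>W. pd i (snd p) y * pdl (fst p) g y + snd p y * pdl (i # fst p) g y) y"
  proof (rule has_pd_sum_list)
    fix p assume "p \<in> set W"
    then obtain cw where "power_series_on r cw (snd p)" using W by blast
    from has_pd_mult[OF power_series_on_has_pd[OF this y] pdl_g]
    show "has_pd i (\<lambda>z. snd p z * pdl (fst p) g z)
        (pd i (snd p) y * pdl (fst p) g y + snd p y * pdl (i # fst p) g y) y" .
  qed
qed

definition lower_order_terms ::
    "real \<Rightarrow> 'n list \<Rightarrow> ('n list \<times> (real^'n \<Rightarrow> real)) list \<Rightarrow> bool" where
  "lower_order_terms r xs W \<longleftrightarrow>
     (\<forall>p\<in>set W. mset (fst p) \<subset># mset xs \<and> (\<exists>c. power_series_on r c (snd p)))"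

lemma lower_order_terms_Cons:
  assumes W: "lower_order_terms r xs W" and a: "power_series_on r ca a"
  shows "lower_order_terms r (i # xs)
    ((xs, pd i a) # map (\<lambda>p. (fst p, pd i (snd p))) W @ map (\<lambda>p. (i # fst p, snd p)) W)"
  unfolding lower_order_terms_def
proof (intro ballI)
  fix p assume "p \<in> set ((xs, pd i a) # map (\<lambda>p. (fst p, pd i (snd p))) W @ map (\<lambda>p. (i # fst p, snd p)) W)"
  then consider "p = (xs, pd i a)"
    | q where "q \<in> set W" "p = (fst q, pd i (snd q))"
    | q where "q \<in> set W" "p = (i # fst q, snd q)"
    by auto
  then show "mset (fst p) \<subset># mset (i # xs) \<and> (\<exists>c. power_series_on r c (snd p))"
  proof cases
    case 1
    then show ?thesis using power_series_on_pd[OF a] by (auto simp: subset_mset.less_le)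
  next
    case 2
    with W obtain c where "mset (fst q) \<subset># mset xs" "power_series_on r c (snd q)"
      by (auto simp: lower_order_terms_def)
    with 2 show ?thesis
      using power_series_on_pd[of r c "snd q" i] subset_mset.less_trans[of _ "mset xs"] by auto
  next
    case 3
    with W show ?thesis by (auto simp: lower_order_terms_def)
  qed
qed

lemma pdl_mult_expansion:
  fixes a :: "real^'n::finite \<Rightarrow> real"
  assumes a: "power_series_on r ca a"
  shows "\<exists>W. lower_order_terms r xs W \<and>
     (\<forall>g cg y. power_series_on r cg g \<longrightarrow> y \<in> ball 0 r \<longrightarrow>
        pdl xs (\<lambda>z. a z * g z) y = a y * pdl xs g y + (\<Sum>p\<leftarrow>W. snd p y * pdl (fst p) g y))"
proof (induction xs)
  case Nil
  show ?case by (rule exI[of _ "[]"]) (simp add: lower_order_terms_def)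
next
  case (Cons i xs)
  then obtain W where W_lower: "lower_order_terms r xs W"
    and W_eq: "\<And>g cg y. power_series_on r cg g \<Longrightarrow> y \<in> ball 0 r \<Longrightarrow>
        pdl xs (\<lambda>z. a z * g z) y = a y * pdl xs g y + (\<Sum>p\<leftarrow>W. snd p y * pdl (fst p) g y)"
    by blast
  define W' where "W' = (xs, pd i a) # map (\<lambda>p. (fst p, pd i (snd p))) W @ map (\<lambda>p. (i # fst p, snd p)) W"
  have "pdl (i # xs) (\<lambda>z. a z * g z) y = a y * pdl (i # xs) g y + (\<Sum>p\<leftarrow>W'. snd p y * pdl (fst p) g y)"
    if g: "power_series_on r cg g" and y: "y \<in> ball 0 r" for g cg y
  proof -
    have "pdl (i # xs) (\<lambda>z. a z * g z) y
        = pd i (\<lambda>z. a z * pdl xs g z + (\<Sum>p\<leftarrow>W. snd p z * pdl (fst p) g z)) y"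
      using pd_cong_open[of "ball 0 r" y "pdl xs (\<lambda>z. a z * g z)"] W_eq[OF g] y by simp
    also have "\<dots> = a y * pdl (i # xs) g y + (\<Sum>p\<leftarrow>W'. snd p y * pdl (fst p) g y)"
      using W_lower by (subst pd_product_sum[OF a g y])
        (auto simp: W'_def lower_order_terms_def sum_list_addf comp_def algebra_simps)
    finally show ?thesis .
  qed
  moreover have "lower_order_terms r (i # xs) W'"
    unfolding W'_def by (rule lower_order_terms_Cons[OF W_lower a])
  ultimately show ?case by blast
qed

lemma monomial_at_0_at_0:
  "monomial_at 0 I (0::real^'n::finite) = (if mi_abs I = 0 then 1 else 0)"
  unfolding monomial_at_def mi_abs_def by (auto simp: power_0_left)

lemma abs_monomial_at_0_le:
  fixes y :: "real^'n::finite"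
  assumes "\<And>l. \<bar>y $ l\<bar> \<le> \<delta>"
  shows "\<bar>monomial_at 0 I y\<bar> \<le> \<delta> ^ mi_abs I"
proof -
  have "\<bar>monomial_at 0 I y\<bar> = (\<Prod>l\<in>UNIV. \<bar>y $ l\<bar> ^ I l)"
    unfolding monomial_at_def abs_prod by (simp add: power_abs)
  also have "\<dots> \<le> (\<Prod>l\<in>UNIV. \<delta> ^ I l)"
    by (intro prod_mono conjI power_mono assms) simp_all
  also have "\<dots> = \<delta> ^ mi_abs I" unfolding mi_abs_def by (simp add: power_sum)
  finally show ?thesis .
qed

lemma power_series_on_diff_at_0_le:
  fixes f :: "real^'n::finite \<Rightarrow> real"
  assumes f: "power_series_on r c f" and \<rho>: "0 < \<rho>" "(\<chi> l. \<rho>) \<in> ball (0::real^'n) r"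
    and y: "norm y \<le> \<rho>"
  shows "norm (f y - f 0) \<le> norm y / \<rho> * (\<Sum>\<^sub>\<infinity>I. \<bar>c I\<bar> * \<rho> ^ mi_abs I)"
proof -
  define G where "G I = \<bar>c I\<bar> * \<rho> ^ mi_abs I" for I
  have "\<bar>c I * monomial_at 0 I (\<chi> l. \<rho>)\<bar> = G I" for I :: "'n \<Rightarrow> nat"
    using \<rho> by (simp add: G_def monomial_at_def mi_abs_def power_sum abs_mult abs_prod)
  then have "G summable_on UNIV"
    using power_series_on_abs_summable[OF f \<rho>(2)] by simp
  then have T: "(G has_sum (\<Sum>\<^sub>\<infinity>I. G I)) UNIV" by simp
  have "\<rho> \<le> norm (\<chi> l. \<rho> :: real^'n)" using component_le_norm_cart[of "\<chi> l. \<rho> :: real^'n"] \<rho> by simp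
  then have "y \<in> ball 0 r" "0 \<in> ball 0 r" using y \<rho> by simp_all
  then have diff: "((\<lambda>I. c I * monomial_at 0 I y + - (c I * monomial_at 0 I 0)) has_sum (f y + - f 0)) UNIV"
    by (intro has_sum_add has_sum_uminusI power_series_onD[OF f])
  have termwise: "norm (c I * monomial_at 0 I y + - (c I * monomial_at 0 I 0)) \<le> norm y / \<rho> * G I" for I
  proof (cases "mi_abs I = 0")
    case True
    then have "monomial_at 0 I y = monomial_at 0 I 0" by (simp add: monomial_at_def mi_abs_def)
    then show ?thesis using \<rho> by (simp add: G_def)
  next
    case False
    have q: "0 \<le> norm y / \<rho>" "norm y / \<rho> \<le> 1" using y \<rho> by simp_all
    have "norm (c I * monomial_at 0 I y + - (c I * monomial_at 0 I 0)) = \<bar>c I\<bar> * \<bar>monomial_at 0 I y\<bar>"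
      using False by (simp add: monomial_at_0_at_0 abs_mult)
    also have "\<dots> \<le> \<bar>c I\<bar> * (norm y / \<rho> * \<rho> ^ mi_abs I)"
    proof (rule mult_left_mono)
      have "\<bar>monomial_at 0 I y\<bar> \<le> norm y ^ mi_abs I"
        by (rule abs_monomial_at_0_le) (rule component_le_norm_cart)
      also have "\<dots> = (norm y / \<rho>) ^ mi_abs I * \<rho> ^ mi_abs I"
        using \<rho> by (simp add: power_divide)
      also have "\<dots> \<le> norm y / \<rho> * \<rho> ^ mi_abs I"
        using power_decreasing[of 1 "mi_abs I" "norm y / \<rho>"] q False \<rho>
        by (intro mult_right_mono) simp_all
      finally show "\<bar>monomial_at 0 I y\<bar> \<le> norm y / \<rho> * \<rho> ^ mi_abs I" .
    qed simp
    finally show ?thesis by (simp add: G_def mult_ac)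
  qed
  from norm_infsum_le[OF diff has_sum_cmult_right[OF T] termwise] show ?thesis
    by (simp add: G_def)
qed

lemma power_series_on_isCont_0:
  fixes f :: "real^'n::finite \<Rightarrow> real"
  assumes f: "power_series_on r c f" and r: "0 < r"
  shows "isCont f 0"
proof -
  define \<rho> where "\<rho> = r / (2 * real CARD('n))"
  have \<rho>: "0 < \<rho>" using r by (simp add: \<rho>_def)
  have "norm (\<chi> l. \<rho> :: real^'n) \<le> (\<Sum>l\<in>UNIV. \<bar>(\<chi> l. \<rho> :: real^'n) $ l\<bar>)"
    by (rule norm_le_l1_cart)
  also have "\<dots> = r / 2" using r by (simp add: \<rho>_def)
  finally have w: "(\<chi> l. \<rho>) \<in> ball (0::real^'n) r" using r by simp
  define T where "T = (\<Sum>\<^sub>\<infinity>I. \<bar>c I\<bar> * \<rho> ^ mi_abs I)"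
  have "\<forall>\<^sub>F y in at 0. norm (f y - f 0) \<le> norm y / \<rho> * T"
    unfolding eventually_at using \<rho> power_series_on_diff_at_0_le[OF f \<rho> w]
    by (intro exI[of _ \<rho>]) (simp add: dist_norm T_def)
  moreover have "((\<lambda>y. norm y / \<rho> * T) \<longlongrightarrow> 0) (at 0)"
    by (intro tendsto_mult_left_zero tendsto_divide_zero tendsto_norm_zero tendsto_ident_at)
  ultimately have "((\<lambda>y. f y - f 0) \<longlongrightarrow> 0) (at 0)"
    by (rule Lim_null_comparison)
  then show ?thesis unfolding isCont_def by (simp add: Lim_null[symmetric])
qed

lemma rank_one_rows_proportional:
  fixes A :: "real^'n::finite^'m::finite"
  assumes "rank A = 1" "A $ k $ k' \<noteq> 0"
  shows "A $ k $ k' *\<^sub>R A $ i = A $ i $ k' *\<^sub>R A $ k"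
proof -
  have "A $ i \<in> span {A $ k}"
  proof (rule ccontr)
    assume not_span: "A $ i \<notin> span {A $ k}"
    have "A $ k \<noteq> 0" using assms(2) by auto
    have "independent {A $ i, A $ k}"
      by (rule independent_insertI[OF not_span]) (simp add: \<open>A $ k \<noteq> 0\<close>)
    moreover have "{A $ i, A $ k} \<subseteq> rows A" by (auto simp: rows_def row_def vec_eq_iff)
    ultimately have "card {A $ i, A $ k} \<le> dim (rows A)" by (rule independent_card_le_dim[rotated])
    moreover have "A $ i \<noteq> A $ k" using not_span span_base[of "A $ k" "{A $ k}"] by auto
    ultimately show False using assms(1) by (simp add: row_rank_def)
  qed
  then obtain t where "A $ i = t *\<^sub>R A $ k" by (auto simp: span_singleton)
  then show ?thesis by simp
qed

lemma vec_nth_sum_list: "(\<Sum>p\<leftarrow>W. f p) $ j = (\<Sum>p\<leftarrow>W. f p $ j)"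
  by (induction W) auto

lemma sum_list_in_span: "(\<And>p. p \<in> set W \<Longrightarrow> f p \<in> span S) \<Longrightarrow> (\<Sum>p\<leftarrow>W. f p) \<in> span S"
  by (induction W) (auto intro: span_add span_zero)

lemma pdl_snoc: "pdl (xs @ [i]) f = pdl xs (pd i f)"
  by (induction xs) auto

definition grad_pdl :: "'n list \<Rightarrow> (real^'n \<Rightarrow> real) \<Rightarrow> real^'n \<Rightarrow> real^'n" where
  "grad_pdl xs u x = (\<chi> j. pdl xs (pd j u) x)"

lemma grad_pdl_mset_eq:
  assumes "power_series_on r c u" "x \<in> ball 0 r" "mset xs = mset ys"
  shows "grad_pdl xs u x = grad_pdl ys u x"
  unfolding grad_pdl_def using pdl_mset_eq[OF power_series_on_pd[OF assms(1)] assms(2,3)] by simp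

lemma grad_pdl_snoc_expansion:
  assumes u: "power_series_on r c u" and V: "open V" "V \<subseteq> ball 0 r" "x \<in> V"
    and rank_one: "\<And>z j. z \<in> V \<Longrightarrow>
      pd k (pd k u) z * pd i (pd j u) z = pd i (pd k u) z * pd k (pd j u) z"
  obtains WA WB where "lower_order_terms r xs WA" "lower_order_terms r xs WB"
    and "pd k (pd k u) x *\<^sub>R grad_pdl (xs @ [i]) u x + (\<Sum>p\<leftarrow>WA. snd p x *\<^sub>R grad_pdl (fst p @ [i]) u x)
      = pd i (pd k u) x *\<^sub>R grad_pdl (xs @ [k]) u x + (\<Sum>p\<leftarrow>WB. snd p x *\<^sub>R grad_pdl (fst p @ [k]) u x)"
proof -
  define A where "A = pd k (pd k u)"
  define B where "B = pd i (pd k u)"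
  have A: "power_series_on r (coeff_pd k (coeff_pd k c)) A"
    and B: "power_series_on r (coeff_pd i (coeff_pd k c)) B"
    unfolding A_def B_def by (intro power_series_on_pd u)+
  have x: "x \<in> ball 0 r" using V by blast
  obtain WA where WA_lower: "lower_order_terms r xs WA"
    and WA: "\<And>g cg. power_series_on r cg g \<Longrightarrow>
      pdl xs (\<lambda>z. A z * g z) x = A x * pdl xs g x + (\<Sum>p\<leftarrow>WA. snd p x * pdl (fst p) g x)"
    using pdl_mult_expansion[OF A, of xs] x by blast
  obtain WB where WB_lower: "lower_order_terms r xs WB"
    and WB: "\<And>g cg. power_series_on r cg g \<Longrightarrow>
      pdl xs (\<lambda>z. B z * g z) x = B x * pdl xs g x + (\<Sum>p\<leftarrow>WB. snd p x * pdl (fst p) g x)"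
    using pdl_mult_expansion[OF B, of xs] x by blast
  have "A x * pdl xs (pd i (pd j u)) x + (\<Sum>p\<leftarrow>WA. snd p x * pdl (fst p) (pd i (pd j u)) x)
      = B x * pdl xs (pd k (pd j u)) x + (\<Sum>p\<leftarrow>WB. snd p x * pdl (fst p) (pd k (pd j u)) x)" for j
  proof -
    have "pdl xs (\<lambda>z. A z * pd i (pd j u) z) x = pdl xs (\<lambda>z. B z * pd k (pd j u) z) x"
      using V rank_one by (intro pdl_cong_open) (auto simp: A_def B_def)
    then show ?thesis
      using WA[OF power_series_on_pd[OF power_series_on_pd[OF u]]]
        WB[OF power_series_on_pd[OF power_series_on_pd[OF u]]] by simp
  qed
  then show ?thesis
    using that[OF WA_lower WB_lower]
    by (simp add: vec_eq_iff grad_pdl_def vec_nth_sum_list pdl_snoc A_def B_def)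
qed

lemma grad_pdl_snoc_in_span:
  assumes u: "power_series_on r c u" and V: "open V" "V \<subseteq> ball 0 r" "x \<in> V"
    and rank_one: "\<And>z j. z \<in> V \<Longrightarrow>
      pd k (pd k u) z * pd i (pd j u) z = pd i (pd k u) z * pd k (pd j u) z"
    and nonzero: "pd k (pd k u) x \<noteq> 0"
  shows "grad_pdl (xs @ [i]) u x \<in>
    span (insert (grad_pdl (xs @ [k]) u x) {grad_pdl (zs @ [l]) u x | zs l. length zs < length xs})"
    (is "_ \<in> ?S")
proof -
  obtain WA WB where lower: "lower_order_terms r xs WA" "lower_order_terms r xs WB"
    and expansion: "pd k (pd k u) x *\<^sub>R grad_pdl (xs @ [i]) u x
        + (\<Sum>p\<leftarrow>WA. snd p x *\<^sub>R grad_pdl (fst p @ [i]) u x)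
      = pd i (pd k u) x *\<^sub>R grad_pdl (xs @ [k]) u x
        + (\<Sum>p\<leftarrow>WB. snd p x *\<^sub>R grad_pdl (fst p @ [k]) u x)"
    using grad_pdl_snoc_expansion[OF u V rank_one] by blast
  have "grad_pdl (xs @ [i]) u x = (1 / pd k (pd k u) x) *\<^sub>R
      (pd i (pd k u) x *\<^sub>R grad_pdl (xs @ [k]) u x
        + (\<Sum>p\<leftarrow>WB. snd p x *\<^sub>R grad_pdl (fst p @ [k]) u x)
        - (\<Sum>p\<leftarrow>WA. snd p x *\<^sub>R grad_pdl (fst p @ [i]) u x))"
    using nonzero by (simp add: expansion[symmetric])
  also have "\<dots> \<in> ?S"
  proof -
    have "length (fst p) < length xs" if "p \<in> set WA \<union> set WB" for p
      using that lower mset_subset_size by (fastforce simp: lower_order_terms_def)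
    then have lower: "grad_pdl (fst p @ [l]) u x \<in> ?S" if "p \<in> set WA \<union> set WB" for p l
      using that by (intro span_base) blast
    show ?thesis
      by (intro span_mul span_diff span_add sum_list_in_span span_base insertI1 lower) auto
  qed
  finally show ?thesis .
qed

lemma grad_pdl_in_span_pure_powers:
  assumes u: "power_series_on r c u" and V: "open V" "V \<subseteq> ball 0 r" "x \<in> V"
    and rank_one: "\<And>z i j. z \<in> V \<Longrightarrow>
      pd k (pd k u) z * pd i (pd j u) z = pd i (pd k u) z * pd k (pd j u) z"
    and nonzero: "pd k (pd k u) x \<noteq> 0"
  shows "grad_pdl xs u x \<in> span {grad_pdl (replicate m k) u x | m. m \<le> length xs}"
proof (induction xs rule: wf_induct_rule[OF wf_measures[of "[length, \<lambda>xs. length (filter (\<lambda>l. l \<noteq> k) xs)]"]])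
  case (1 xs)
  define S where "S = span {grad_pdl (replicate m k) u x | m. m \<le> length xs}"
  show ?case
  proof (cases "\<forall>l\<in>set xs. l = k")
    case True
    then have "xs = replicate (length xs) k" by (simp add: replicate_length_same)
    then show ?thesis by (intro span_base) (metis (mono_tags, lifting) mem_Collect_eq order_refl)
  next
    case False
    then obtain i where i: "i \<in> set xs" "i \<noteq> k" by blast
    define ys where "ys = remove1 i xs"
    have mset_xs: "mset xs = mset (ys @ [i])" using i by (simp add: ys_def)
    have len: "length xs = Suc (length ys)"
      using arg_cong[OF mset_xs, of size] by simp
    have non_k: "length (filter (\<lambda>l. l \<noteq> k) xs) = Suc (length (filter (\<lambda>l. l \<noteq> k) ys))"
      using arg_cong[OF mset_xs, of "\<lambda>M. size (filter_mset (\<lambda>l. l \<noteq> k) M)"] i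
      by (simp flip: mset_filter)
    have "grad_pdl xs u x = grad_pdl (ys @ [i]) u x"
      using V by (intro grad_pdl_mset_eq[OF u _ mset_xs]) blast
    also have "\<dots> \<in> span (insert (grad_pdl (ys @ [k]) u x)
        {grad_pdl (zs @ [l]) u x | zs l. length zs < length ys})"
      by (rule grad_pdl_snoc_in_span[OF u V rank_one nonzero])
    also have "\<dots> \<subseteq> S"
    proof (intro span_minimal subspace_span insert_subsetI subsetI)
      show "grad_pdl (ys @ [k]) u x \<in> S"
        using "1"[of "ys @ [k]"] len non_k by (simp add: S_def)
      fix v assume "v \<in> {grad_pdl (zs @ [l]) u x | zs l. length zs < length ys}"
      then obtain zs l where v: "v = grad_pdl (zs @ [l]) u x" "length zs < length ys" by blast
      then have "v \<in> span {grad_pdl (replicate m k) u x | m. m \<le> length (zs @ [l])}"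
        using "1"[of "zs @ [l]"] len by simp
      also have "\<dots> \<subseteq> S"
        unfolding S_def using v len by (intro span_mono) auto
      finally show "v \<in> S" .
    qed (simp add: S_def)
    finally show ?thesis by (simp add: S_def)
  qed
qed

lemma grad_pdI_eq_grad_pdl:
  assumes "power_series_on r c u" "x \<in> ball 0 r" "\<And>l. count_list xs l = I l"
  shows "grad_pdI I u x = grad_pdl xs u x"
  unfolding grad_pdI_def grad_pdl_def
  using pdI_eq_pdl[OF power_series_on_pd[OF assms(1)] assms(2,3)] by simp

lemma mi_abs_count_list: "mi_abs (\<lambda>l. count_list xs l) = length (xs :: 'n::finite list)"
  unfolding mi_abs_def using sum_count_set[of xs UNIV] by simp

lemma grad_pdI_in_span_pure_powers:
  fixes u :: "real^'n::finite \<Rightarrow> real" and I :: "'n \<Rightarrow> nat"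
  assumes u: "power_series_on r c u" and V: "open V" "V \<subseteq> ball 0 r" "x \<in> V"
    and rank_one: "\<And>z i j. z \<in> V \<Longrightarrow>
      pd k (pd k u) z * pd i (pd j u) z = pd i (pd k u) z * pd k (pd j u) z"
    and nonzero: "pd k (pd k u) x \<noteq> 0"
  shows "grad_pdI I u x \<in> span {grad_pdI ((\<lambda>_. 0)(k := m)) u x | m. m \<le> mi_abs I}"
proof -
  have x: "x \<in> ball 0 r" using V by blast
  obtain xs where xs: "\<And>l. count_list xs l = I l" using ex_count_list_eq by blast
  have "grad_pdI ((\<lambda>_. 0)(k := m)) u x = grad_pdl (replicate m k) u x" for m
    by (rule grad_pdI_eq_grad_pdl[OF u x]) (induction m, simp_all)
  moreover have "mi_abs I = length xs" using mi_abs_count_list[of xs] xs by simp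
  ultimately show ?thesis
    using grad_pdl_in_span_pure_powers[OF u V rank_one nonzero] grad_pdI_eq_grad_pdl[OF u x xs]
    by simp
qed

lemma hessian_rank_one_minor_eq:
  assumes "rank (hessian u z) = 1" "pd k (pd k u) z \<noteq> 0"
  shows "pd k (pd k u) z * pd i (pd j u) z = pd i (pd k u) z * pd k (pd j u) z"
proof -
  have "hessian u z $ k $ k \<noteq> 0" using assms(2) by (simp add: hessian_def)
  from rank_one_rows_proportional[OF assms(1) this, of i]
  have "(hessian u z $ k $ k *\<^sub>R hessian u z $ i) $ j = (hessian u z $ i $ k *\<^sub>R hessian u z $ k) $ j"
    by simp
  then show ?thesis by (simp add: hessian_def)
qed

lemma real_analytic_near_0_power_series_on:
  assumes "real_analytic_near u 0"
  obtains r c where "0 < r" "power_series_on r c u"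
proof -
  have "real_analytic_at u 0" using assms unfolding real_analytic_near_def by blast
  with that show ?thesis unfolding real_analytic_at_def power_series_on_def by blast
qed

theorem lemma10p2:
  fixes u :: "real^'n \<Rightarrow> real" and k :: 'n
  assumes "real_analytic_near u 0"
    and "\<exists>U. open U \<and> 0 \<in> U \<and> (\<forall>x\<in>U. rank (hessian u x) = 1)"
    and "pd k (pd k u) 0 \<noteq> 0"
  shows "\<exists>V. open V \<and> 0 \<in> V \<and>
           (\<forall>x\<in>V. \<forall>I :: 'n \<Rightarrow> nat.
              grad_pdI I u x \<in> span {grad_pdI ((\<lambda>_. 0)(k := m)) u x | m. m \<le> mi_abs I})"
proof -
  obtain r c where r: "0 < r" and u: "power_series_on r c u"
    using real_analytic_near_0_power_series_on[OF assms(1)] by blast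
  obtain U where U: "open U" "0 \<in> U" "\<And>x. x \<in> U \<Longrightarrow> rank (hessian u x) = 1"
    using assms(2) by blast
  have "isCont (pd k (pd k u)) 0"
    by (rule power_series_on_isCont_0[OF power_series_on_pd[OF power_series_on_pd[OF u]] r])
  from continuous_at_avoid[OF this assms(3)]
  obtain \<delta> where \<delta>: "0 < \<delta>" "\<And>y. dist 0 y < \<delta> \<Longrightarrow> pd k (pd k u) y \<noteq> 0" by blast
  define V where "V = ball 0 (min r \<delta>) \<inter> U"
  have V: "open V" "V \<subseteq> ball 0 r" "0 \<in> V" using U r \<delta> by (auto simp: V_def)
  have nonzero: "pd k (pd k u) x \<noteq> 0" if "x \<in> V" for x using that \<delta>(2) by (simp add: V_def)
  have rank_one: "pd k (pd k u) z * pd i (pd j u) z = pd i (pd k u) z * pd k (pd j u) z"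
    if "z \<in> V" for z i j
    using that by (intro hessian_rank_one_minor_eq U(3) nonzero) (simp_all add: V_def)
  have "grad_pdI I u x \<in> span {grad_pdI ((\<lambda>_. 0)(k := m)) u x | m. m \<le> mi_abs I}"
    if "x \<in> V" for x and I :: "'n \<Rightarrow> nat"
    by (rule grad_pdI_in_span_pure_powers[OF u V(1,2) that rank_one nonzero[OF that]])
  with V show ?thesis by blast
qed

end
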